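(* Let $E$ be a finite graph and let $R$ be a unital commutative ring of characteristic $0$. If $\alpha_1,\dots,\alpha_n\in E^*$ satisfy $\sum_{i=1}^n\alpha_i\alpha_i^*=1$ in $L_R(E)$, then $\alpha_i^*\alpha_j=0$ for all $i\ne j$.
   Context: A graph $E=(E^0,E^1,r,s)$ has vertices $E^0$, edges $E^1$, and range and source maps $r,s$; finite means $E^0,E^1$ finite. A path is a word $e_1\cdots e_n$ with $r(e_i)=s(e_{i+1})$; vertices are paths of length $0$; $E^*$ is the set of finite paths. The Leavitt path algebra $L_R(E)$ is the universal $R$-algebra generated by pairwise orthogonal idempotents $\{v\}_{v\in E^0}$ and $\{e,e^*\}_{e\in E^1}$ with: $e^*f=0$ for $e\ne f$; $e^*e=r(e)$; $s(e)e=e=er(e)$; $e^*s(e)=e^*=r(e)e^*$; and $v=\sum_{e\in s^{-1}(v)}ee^*$ whenever $s^{-1}(v)$ is finite and nonempty. For $\alpha=e_1\cdots e_n$, $\alpha$ denotes the product $e_1\cdots e_n$ and $\alpha^*=e_n^*\cdots e_1^*$. For finite $E$, $L_R(E)$ is unital with $1=\sum_{v\in E^0}v$. *)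

theory Defs
  imports Main "Graph_Theory.Digraph"
begin

text \<open>Graphs: a pre_digraph G with verts G = E^0, arcs G = E^1,
  tail G = s (source), head G = r (range).  Finite graph = fin_digraph G.\<close>

datatype ('v,'e) lgen = V 'v | Ed 'e | Gh 'e

datatype ('v,'e,'r) lterm =
    Gen "('v,'e) lgen"
  | Zero
  | Add "('v,'e,'r) lterm" "('v,'e,'r) lterm"
  | Neg "('v,'e,'r) lterm"
  | Mul "('v,'e,'r) lterm" "('v,'e,'r) lterm"
  | Smul 'r "('v,'e,'r) lterm"

fun tsum :: "('v,'e,'r) lterm list \<Rightarrow> ('v,'e,'r) lterm" where
  "tsum [] = Zero"
| "tsum (x # xs) = Add x (tsum xs)"

text \<open>Equality in the Leavitt path algebra L_R(G): the least congruence on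
  expressions making the quotient an associative R-algebra and satisfying the
  Leavitt relations (the presentation of the universal algebra).  Generators
  not belonging to the graph are identified with 0.\<close>
inductive leq :: "('v,'e) pre_digraph \<Rightarrow> ('v,'e,'r::comm_ring_1) lterm \<Rightarrow> ('v,'e,'r) lterm \<Rightarrow> bool"
  for G where
  refl: "leq G x x"
| sym: "leq G x y \<Longrightarrow> leq G y x"
| trans: "leq G x y \<Longrightarrow> leq G y z \<Longrightarrow> leq G x z"
| cong_add: "leq G x x' \<Longrightarrow> leq G y y' \<Longrightarrow> leq G (Add x y) (Add x' y')"
| cong_neg: "leq G x x' \<Longrightarrow> leq G (Neg x) (Neg x')"
| cong_mul: "leq G x x' \<Longrightarrow> leq G y y' \<Longrightarrow> leq G (Mul x y) (Mul x' y')"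
| cong_smul: "leq G x x' \<Longrightarrow> leq G (Smul a x) (Smul a x')"
| add_assoc: "leq G (Add (Add x y) z) (Add x (Add y z))"
| add_comm: "leq G (Add x y) (Add y x)"
| add_zero: "leq G (Add Zero x) x"
| add_neg: "leq G (Add (Neg x) x) Zero"
| mul_assoc: "leq G (Mul (Mul x y) z) (Mul x (Mul y z))"
| distr_l: "leq G (Mul x (Add y z)) (Add (Mul x y) (Mul x z))"
| distr_r: "leq G (Mul (Add x y) z) (Add (Mul x z) (Mul y z))"
| smul_add: "leq G (Smul a (Add x y)) (Add (Smul a x) (Smul a y))"
| smul_sadd: "leq G (Smul (a + b) x) (Add (Smul a x) (Smul b x))"
| smul_mult: "leq G (Smul (a * b) x) (Smul a (Smul b x))"
| smul_one: "leq G (Smul 1 x) x"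
| smul_mul_l: "leq G (Smul a (Mul x y)) (Mul (Smul a x) y)"
| smul_mul_r: "leq G (Smul a (Mul x y)) (Mul x (Smul a y))"
| junk_v: "v \<notin> verts G \<Longrightarrow> leq G (Gen (V v)) Zero"
| junk_e: "e \<notin> arcs G \<Longrightarrow> leq G (Gen (Ed e)) Zero"
| junk_g: "e \<notin> arcs G \<Longrightarrow> leq G (Gen (Gh e)) Zero"
| v_idem: "v \<in> verts G \<Longrightarrow> leq G (Mul (Gen (V v)) (Gen (V v))) (Gen (V v))"
| v_orth: "v \<in> verts G \<Longrightarrow> w \<in> verts G \<Longrightarrow> v \<noteq> w \<Longrightarrow>
           leq G (Mul (Gen (V v)) (Gen (V w))) Zero"
| ghost_orth: "e \<in> arcs G \<Longrightarrow> f \<in> arcs G \<Longrightarrow> e \<noteq> f \<Longrightarrow>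
           leq G (Mul (Gen (Gh e)) (Gen (Ed f))) Zero"
| ghost_edge: "e \<in> arcs G \<Longrightarrow> leq G (Mul (Gen (Gh e)) (Gen (Ed e))) (Gen (V (head G e)))"
| src_edge: "e \<in> arcs G \<Longrightarrow> leq G (Mul (Gen (V (tail G e))) (Gen (Ed e))) (Gen (Ed e))"
| edge_rng: "e \<in> arcs G \<Longrightarrow> leq G (Mul (Gen (Ed e)) (Gen (V (head G e)))) (Gen (Ed e))"
| ghost_src: "e \<in> arcs G \<Longrightarrow> leq G (Mul (Gen (Gh e)) (Gen (V (tail G e)))) (Gen (Gh e))"
| rng_ghost: "e \<in> arcs G \<Longrightarrow> leq G (Mul (Gen (V (head G e))) (Gen (Gh e))) (Gen (Gh e))"
| ck2: "v \<in> verts G \<Longrightarrow> finite {e \<in> arcs G. tail G e = v} \<Longrightarrow> {e \<in> arcs G. tail G e = v} \<noteq> {} \<Longrightarrow>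
        set es = {e \<in> arcs G. tail G e = v} \<Longrightarrow> distinct es \<Longrightarrow>
        leq G (Gen (V v)) (tsum (map (\<lambda>e. Mul (Gen (Ed e)) (Gen (Gh e))) es))"

text \<open>Finite paths: a pair (v, es); if es = [] it is the vertex v (length 0 path),
  otherwise the edge word es, with v its source.\<close>
definition is_path :: "('v,'e) pre_digraph \<Rightarrow> 'v \<times> 'e list \<Rightarrow> bool" where
  "is_path G p \<longleftrightarrow> fst p \<in> verts G \<and> set (snd p) \<subseteq> arcs G \<and>
     (snd p \<noteq> [] \<longrightarrow> tail G (hd (snd p)) = fst p) \<and>
     (\<forall>i. Suc i < length (snd p) \<longrightarrow> head G (snd p ! i) = tail G (snd p ! Suc i))"

fun edges_tm :: "'e list \<Rightarrow> ('v,'e,'r) lterm" where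
  "edges_tm [] = Zero"
| "edges_tm [e] = Gen (Ed e)"
| "edges_tm (e # es) = Mul (Gen (Ed e)) (edges_tm es)"

fun ghosts_tm :: "'e list \<Rightarrow> ('v,'e,'r) lterm" where
  "ghosts_tm [] = Zero"
| "ghosts_tm [e] = Gen (Gh e)"
| "ghosts_tm (e # es) = Mul (ghosts_tm es) (Gen (Gh e))"

definition path_tm :: "'v \<times> 'e list \<Rightarrow> ('v,'e,'r) lterm" where
  "path_tm p = (if snd p = [] then Gen (V (fst p)) else edges_tm (snd p))"

definition ghost_tm :: "'v \<times> 'e list \<Rightarrow> ('v,'e,'r) lterm" where
  "ghost_tm p = (if snd p = [] then Gen (V (fst p)) else ghosts_tm (snd p))"

text \<open>The unit of L_R(G) for finite G: the sum of all vertices.\<close>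
definition one_tm :: "('v,'e) pre_digraph \<Rightarrow> ('v,'e,'r) lterm" where
  "one_tm G = tsum (map (\<lambda>v. Gen (V v)) (SOME vs. set vs = verts G \<and> distinct vs))"

end

theory Submission
  imports Defs "HOL-Library.Stream" "HOL-Library.Sublist"
begin

text \<open>
  Algebraically, if neither of two paths \<alpha>, \<beta> extends the other, then
  \<alpha>*\<beta> = 0 in L_R(E): the ghost edges of \<alpha> cancel the edges of \<beta> up to the first
  disagreement, where e*f = 0.  Analytically, L_R(E) acts on R-valued functions on the
  boundary path space of E, and \<alpha>\<alpha>* acts as multiplication by the indicator function of the
  cylinder Z(\<alpha>) of boundary paths starting with \<alpha>.  So the hypothesis says that every
  boundary path lies in exactly one cylinder Z(\<alpha>_i), counted in R, which has characteristic 0.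
  As cylinders are nonempty and Z(\<alpha>\<gamma>) \<subseteq> Z(\<alpha>), no \<alpha>_i extends another \<alpha>_j.
\<close>

section \<open>Calculations in the Leavitt path algebra\<close>

lemmas leq_trans[trans] = leq.trans

lemma leq_zero_if_double:
  assumes "leq G y (Add y y)"
  shows "leq G y Zero"
proof -
  have "leq G Zero (Add (Neg y) y)" by (rule leq.sym[OF leq.add_neg])
  also have "leq G \<dots> (Add (Neg y) (Add y y))" by (intro leq.cong_add leq.refl assms)
  also have "leq G \<dots> (Add (Add (Neg y) y) y)" by (rule leq.sym[OF leq.add_assoc])
  also have "leq G \<dots> (Add Zero y)" by (intro leq.cong_add leq.refl leq.add_neg)
  also have "leq G \<dots> y" by (rule leq.add_zero)
  finally show ?thesis by (rule leq.sym)
qed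

lemma leq_Mul_Zero_right: "leq G (Mul x Zero) Zero"
proof (rule leq_zero_if_double)
  have "leq G (Mul x Zero) (Mul x (Add Zero Zero))"
    by (intro leq.cong_mul leq.refl leq.sym[OF leq.add_zero])
  also have "leq G \<dots> (Add (Mul x Zero) (Mul x Zero))" by (rule leq.distr_l)
  finally show "leq G (Mul x Zero) (Add (Mul x Zero) (Mul x Zero))" .
qed

lemma leq_Mul_Zero_left: "leq G (Mul Zero x) Zero"
proof (rule leq_zero_if_double)
  have "leq G (Mul Zero x) (Mul (Add Zero Zero) x)"
    by (intro leq.cong_mul leq.refl leq.sym[OF leq.add_zero])
  also have "leq G \<dots> (Add (Mul Zero x) (Mul Zero x))" by (rule leq.distr_r)
  finally show "leq G (Mul Zero x) (Add (Mul Zero x) (Mul Zero x))" .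
qed

lemma leq_Mul_zero_if_right: "leq G y Zero \<Longrightarrow> leq G (Mul x y) Zero"
  by (meson leq.cong_mul leq.refl leq.trans leq_Mul_Zero_right)

lemma leq_Mul_zero_if_left: "leq G y Zero \<Longrightarrow> leq G (Mul y x) Zero"
  by (meson leq.cong_mul leq.refl leq.trans leq_Mul_Zero_left)

lemma path_tm_Cons:
  assumes "e \<in> arcs G"
  shows "leq G (path_tm (v, e # es)) (Mul (Gen (Ed e)) (path_tm (head G e, es)))"
proof (cases es)
  case Nil
  then show ?thesis using leq.sym[OF leq.edge_rng[OF assms]] by (simp add: path_tm_def)
next
  case Cons
  then show ?thesis by (simp add: path_tm_def leq.refl)
qed

lemma ghost_tm_Cons:
  assumes "e \<in> arcs G"
  shows "leq G (ghost_tm (v, e # es)) (Mul (ghost_tm (head G e, es)) (Gen (Gh e)))"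
proof (cases es)
  case Nil
  then show ?thesis using leq.sym[OF leq.rng_ghost[OF assms]] by (simp add: ghost_tm_def)
next
  case Cons
  then show ?thesis by (simp add: ghost_tm_def leq.refl)
qed

lemma is_path_Nil: "is_path G (v, []) \<longleftrightarrow> v \<in> verts G"
  by (simp add: is_path_def)

context wf_digraph
begin

lemma is_path_Cons:
  "is_path G (v, e # es) \<longleftrightarrow> e \<in> arcs G \<and> tail G e = v \<and> is_path G (head G e, es)"
  by (cases es) (auto simp: is_path_def nth_Cons split: nat.splits)

lemma source_Mul_path_tm:
  assumes "is_path G (v, es)"
  shows "leq G (Mul (Gen (V v)) (path_tm (v, es))) (path_tm (v, es))"
proof (cases es)
  case Nil
  then show ?thesis using assms by (simp add: path_tm_def is_path_Nil leq.v_idem)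
next
  case (Cons e es')
  then have e: "e \<in> arcs G" "tail G e = v" using assms by (simp_all add: is_path_Cons)
  let ?p = "path_tm (head G e, es')"
  have "leq G (Mul (Gen (V v)) (path_tm (v, es))) (Mul (Gen (V v)) (Mul (Gen (Ed e)) ?p))"
    unfolding Cons by (intro leq.cong_mul leq.refl path_tm_Cons e(1))
  also have "leq G \<dots> (Mul (Mul (Gen (V v)) (Gen (Ed e))) ?p)"
    by (rule leq.sym[OF leq.mul_assoc])
  also have "leq G \<dots> (Mul (Gen (Ed e)) ?p)"
    by (intro leq.cong_mul leq.refl leq.src_edge[OF e(1), unfolded e(2)])
  also have "leq G \<dots> (path_tm (v, es))"
    unfolding Cons by (rule leq.sym[OF path_tm_Cons[OF e(1)]])
  finally show ?thesis .
qed

lemma ghost_tm_Mul_source: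
  assumes "is_path G (v, es)"
  shows "leq G (Mul (ghost_tm (v, es)) (Gen (V v))) (ghost_tm (v, es))"
proof (cases es)
  case Nil
  then show ?thesis using assms by (simp add: ghost_tm_def is_path_Nil leq.v_idem)
next
  case (Cons e es')
  then have e: "e \<in> arcs G" "tail G e = v" using assms by (simp_all add: is_path_Cons)
  let ?g = "ghost_tm (head G e, es')"
  have "leq G (Mul (ghost_tm (v, es)) (Gen (V v))) (Mul (Mul ?g (Gen (Gh e))) (Gen (V v)))"
    unfolding Cons by (intro leq.cong_mul leq.refl ghost_tm_Cons e(1))
  also have "leq G \<dots> (Mul ?g (Mul (Gen (Gh e)) (Gen (V v))))"
    by (rule leq.mul_assoc)
  also have "leq G \<dots> (Mul ?g (Gen (Gh e)))"
    by (intro leq.cong_mul leq.refl leq.ghost_src[OF e(1), unfolded e(2)])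
  also have "leq G \<dots> (ghost_tm (v, es))"
    unfolding Cons by (rule leq.sym[OF ghost_tm_Cons[OF e(1)]])
  finally show ?thesis .
qed

lemma ghost_path_zero_if_sources_differ:
  assumes a: "is_path G a" and b: "is_path G b" and "fst a \<noteq> fst b"
  shows "leq G (Mul (ghost_tm a) (path_tm b)) Zero"
proof -
  obtain v es w fs where ab: "a = (v, es)" "b = (w, fs)" by fastforce
  have vw: "v \<in> verts G" "w \<in> verts G" "v \<noteq> w"
    using a b assms(3) ab by (auto simp: is_path_def)
  have p: "is_path G (v, es)" "is_path G (w, fs)" using a b ab by simp_all
  have "leq G (Mul (ghost_tm a) (path_tm b))
      (Mul (Mul (ghost_tm a) (Gen (V v))) (Mul (Gen (V w)) (path_tm b)))"
    unfolding ab
    by (intro leq.cong_mul leq.sym[OF ghost_tm_Mul_source[OF p(1)]] leq.sym[OF source_Mul_path_tm[OF p(2)]])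
  also have "leq G \<dots> (Mul (ghost_tm a) (Mul (Gen (V v)) (Mul (Gen (V w)) (path_tm b))))"
    by (rule leq.mul_assoc)
  also have "leq G \<dots> (Mul (ghost_tm a) (Mul (Mul (Gen (V v)) (Gen (V w))) (path_tm b)))"
    by (intro leq.cong_mul leq.refl leq.sym[OF leq.mul_assoc])
  also have "leq G \<dots> Zero"
    by (rule leq_Mul_zero_if_right, rule leq_Mul_zero_if_left, rule leq.v_orth[OF vw])
  finally show ?thesis .
qed

lemma ghost_Mul_path_tm_Cons:
  assumes "e \<in> arcs G" and "is_path G (w, f # fs)"
  shows "leq G (Mul (Gen (Gh e)) (path_tm (w, f # fs)))
    (if e = f then path_tm (head G f, fs) else Zero)"
proof -
  have f: "f \<in> arcs G" "is_path G (head G f, fs)" using assms(2) by (simp_all add: is_path_Cons)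
  let ?p = "path_tm (head G f, fs)"
  have "leq G (Mul (Gen (Gh e)) (path_tm (w, f # fs))) (Mul (Gen (Gh e)) (Mul (Gen (Ed f)) ?p))"
    by (intro leq.cong_mul leq.refl path_tm_Cons f(1))
  also have "leq G \<dots> (Mul (Mul (Gen (Gh e)) (Gen (Ed f))) ?p)"
    by (rule leq.sym[OF leq.mul_assoc])
  also have "leq G \<dots> (if e = f then ?p else Zero)"
  proof (cases "e = f")
    case True
    then have "leq G (Mul (Mul (Gen (Gh e)) (Gen (Ed f))) ?p) (Mul (Gen (V (head G f))) ?p)"
      unfolding True by (intro leq.cong_mul leq.refl leq.ghost_edge f(1))
    also have "leq G \<dots> ?p" by (rule source_Mul_path_tm[OF f(2)])
    finally show ?thesis using True by simp
  next
    case False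
    then show ?thesis using assms(1) f(1) by (simp add: leq_Mul_zero_if_left leq.ghost_orth)
  qed
  finally show ?thesis .
qed

lemma ghost_path_zero_if_not_prefix:
  assumes "is_path G (v, es)" and "is_path G (v, fs)"
    and "\<not> prefix es fs" and "\<not> prefix fs es"
  shows "leq G (Mul (ghost_tm (v, es)) (path_tm (v, fs))) (Zero :: ('a,'b,'r::comm_ring_1) lterm)"
  using assms
proof (induction es arbitrary: v fs)
  case Nil
  then show ?case by simp
next
  case (Cons e es)
  obtain f fs' where fs: "fs = f # fs'" using Cons.prems(4) by (cases fs) auto
  have e: "e \<in> arcs G" "is_path G (head G e, es)" using Cons.prems(1) by (simp_all add: is_path_Cons)
  let ?g = "ghost_tm (head G e, es) :: ('a,'b,'r) lterm"
  have "leq G (Mul (ghost_tm (v, e # es)) (path_tm (v, fs)))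
      (Mul (Mul ?g (Gen (Gh e))) (path_tm (v, fs)))"
    by (intro leq.cong_mul leq.refl ghost_tm_Cons e(1))
  also have "leq G \<dots> (Mul ?g (Mul (Gen (Gh e)) (path_tm (v, fs))))"
    by (rule leq.mul_assoc)
  also have "leq G \<dots> (Mul ?g (if e = f then path_tm (head G f, fs') else Zero))"
    unfolding fs
    by (intro leq.cong_mul leq.refl ghost_Mul_path_tm_Cons[OF e(1)] Cons.prems(2)[unfolded fs])
  also have "leq G \<dots> Zero"
  proof (cases "e = f")
    case True
    have "is_path G (head G e, fs')" using Cons.prems(2) fs True by (simp add: is_path_Cons)
    moreover have "\<not> prefix es fs'" "\<not> prefix fs' es" using Cons.prems(3,4) fs True by simp_all
    ultimately show ?thesis unfolding if_P[OF True] unfolding True[symmetric]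
      by (rule Cons.IH[OF e(2)])
  next
    case False
    then show ?thesis by (simp add: leq_Mul_Zero_right)
  qed
  finally show ?case .
qed

lemma ghost_path_zero_if_incomparable:
  assumes a: "is_path G a" and b: "is_path G b"
    and incomparable: "fst a = fst b \<Longrightarrow> \<not> prefix (snd a) (snd b) \<and> \<not> prefix (snd b) (snd a)"
  shows "leq G (Mul (ghost_tm a) (path_tm b)) Zero"
proof (cases "fst a = fst b")
  case True
  obtain v es fs where ab: "a = (v, es)" "b = (v, fs)" using True by (metis prod.collapse)
  show ?thesis unfolding ab
    by (rule ghost_path_zero_if_not_prefix) (use a b incomparable True ab in simp_all)
next
  case False
  then show ?thesis by (rule ghost_path_zero_if_sources_differ[OF a b])
qed

end

section \<open>The action on functions on boundary paths\<close>

text \<open>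
  A point (v, s) is a boundary path from v with arcs s.  A finite boundary path ends at a
  sink and is padded with None; the stream after the first None is irrelevant.
\<close>
type_synonym ('v,'e) bpoint = "'v \<times> 'e option stream"

coinductive boundary_path :: "('v,'e) pre_digraph \<Rightarrow> ('v,'e) bpoint \<Rightarrow> bool" for G where
  sink: "v \<in> verts G \<Longrightarrow> out_arcs G v = {} \<Longrightarrow> boundary_path G (v, None ## s)"
| arc: "e \<in> arcs G \<Longrightarrow> boundary_path G (head G e, s) \<Longrightarrow> boundary_path G (tail G e, Some e ## s)"

lemma boundary_path_None:
  "boundary_path G (v, s) \<Longrightarrow> shd s = None \<Longrightarrow> out_arcs G v = {}"
  by (cases rule: boundary_path.cases) auto

lemma boundary_path_Some:
  "boundary_path G (v, s) \<Longrightarrow> shd s = Some e \<Longrightarrow>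
    e \<in> arcs G \<and> tail G e = v \<and> boundary_path G (head G e, stl s)"
  by (cases rule: boundary_path.cases) auto

lemma boundary_path_SCons_Some_iff:
  "boundary_path G (v, Some e ## s) \<longleftrightarrow> e \<in> arcs G \<and> tail G e = v \<and> boundary_path G (head G e, s)"
proof
  assume "boundary_path G (v, Some e ## s)"
  then show "e \<in> arcs G \<and> tail G e = v \<and> boundary_path G (head G e, s)"
    using boundary_path_Some[of G v "Some e ## s" e] by simp
next
  assume "e \<in> arcs G \<and> tail G e = v \<and> boundary_path G (head G e, s)"
  then show "boundary_path G (v, Some e ## s)" using boundary_path.arc[of e G s] by blast
qed

context wf_digraph
begin

lemma boundary_path_fst_in_verts: "boundary_path G x \<Longrightarrow> fst x \<in> verts G"
  by (cases rule: boundary_path.cases) auto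

lemma ex_boundary_path:
  assumes "v \<in> verts G"
  shows "\<exists>s. boundary_path G (v, s)"
proof -
  define next_arc where
    "next_arc u = (if out_arcs G u = {} then None else Some (SOME e. e \<in> out_arcs G u))" for u
  define step where "step u = (case next_arc u of None \<Rightarrow> u | Some e \<Rightarrow> head G e)" for u
  define greedy where "greedy u = smap next_arc (siterate step u)" for u
  have greedy: "greedy u = next_arc u ## greedy (step u)" for u
    unfolding greedy_def by (subst siterate.code) simp
  have "boundary_path G (v, greedy v)"
    using assms
  proof (coinduction arbitrary: v rule: boundary_path.coinduct)
    case (boundary_path v)
    show ?case
    proof (cases "out_arcs G v = {}")
      case True
      then show ?thesis using boundary_path greedy[of v] by (simp add: next_arc_def)
    next
      case False
      define e where "e = (SOME e. e \<in> out_arcs G v)"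
      have "\<exists>e. e \<in> out_arcs G v" using False by blast
      then have "e \<in> out_arcs G v" unfolding e_def by (rule someI_ex)
      then have e: "e \<in> arcs G" "tail G e = v" by (simp_all add: out_arcs_def)
      have "next_arc v = Some e" using False by (simp add: next_arc_def e_def)
      then have "greedy v = Some e ## greedy (head G e)" using greedy[of v] by (simp add: step_def)
      then show ?thesis using e by auto
    qed
  qed
  then show ?thesis by blast
qed

end

fun act_gen :: "('v,'e) pre_digraph \<Rightarrow> ('v,'e) lgen \<Rightarrow> (('v,'e) bpoint \<Rightarrow> 'r::comm_ring_1) \<Rightarrow> ('v,'e) bpoint \<Rightarrow> 'r" where
  "act_gen G (V v) \<phi> x = (if boundary_path G x \<and> fst x = v then \<phi> x else 0)"
| "act_gen G (Ed e) \<phi> x =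
    (if boundary_path G x \<and> shd (snd x) = Some e then \<phi> (head G e, stl (snd x)) else 0)"
| "act_gen G (Gh e) \<phi> x =
    (if e \<in> arcs G \<and> boundary_path G x \<and> fst x = head G e then \<phi> (tail G e, Some e ## snd x) else 0)"

fun act :: "('v,'e) pre_digraph \<Rightarrow> ('v,'e,'r::comm_ring_1) lterm \<Rightarrow> (('v,'e) bpoint \<Rightarrow> 'r) \<Rightarrow> ('v,'e) bpoint \<Rightarrow> 'r" where
  "act G (Gen g) = act_gen G g"
| "act G Zero = (\<lambda>\<phi> x. 0)"
| "act G (Add s t) = (\<lambda>\<phi> x. act G s \<phi> x + act G t \<phi> x)"
| "act G (Neg s) = (\<lambda>\<phi> x. - act G s \<phi> x)"
| "act G (Mul s t) = (\<lambda>\<phi>. act G s (act G t \<phi>))"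
| "act G (Smul a s) = (\<lambda>\<phi> x. a * act G s \<phi> x)"

definition linear_op :: "(('a \<Rightarrow> 'r::comm_ring_1) \<Rightarrow> 'a \<Rightarrow> 'r) \<Rightarrow> bool" where
  "linear_op T \<longleftrightarrow> (\<forall>\<phi> \<psi>. T (\<lambda>x. \<phi> x + \<psi> x) = (\<lambda>x. T \<phi> x + T \<psi> x))
                  \<and> (\<forall>a \<phi>. T (\<lambda>x. a * \<phi> x) = (\<lambda>x. a * T \<phi> x))"

lemma linear_op_act: "linear_op (act G t)"
proof (induction t)
  case (Gen g)
  then show ?case by (cases g) (auto simp: linear_op_def fun_eq_iff)
qed (simp_all add: linear_op_def algebra_simps)

lemma act_add: "act G t (\<lambda>x. \<phi> x + \<psi> x) = (\<lambda>x. act G t \<phi> x + act G t \<psi> x)"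
  using linear_op_act[of G t] by (simp add: linear_op_def)

lemma act_scale: "act G t (\<lambda>x. a * \<phi> x) = (\<lambda>x. a * act G t \<phi> x)"
  using linear_op_act[of G t] by (simp add: linear_op_def)

lemma act_tsum: "act G (tsum ts) \<phi> x = (\<Sum>t\<leftarrow>ts. act G t \<phi> x)"
  by (induction ts) auto

lemma act_edge_ghost:
  "act G (Mul (Gen (Ed e)) (Gen (Gh e))) \<phi> x =
    (if boundary_path G x \<and> shd (snd x) = Some e then \<phi> x else 0)"
proof (cases "boundary_path G x \<and> shd (snd x) = Some e")
  case True
  then have "e \<in> arcs G" "tail G e = fst x" "boundary_path G (head G e, stl (snd x))"
    using boundary_path_Some[of G "fst x" "snd x" e] by simp_all
  moreover have "Some e ## stl (snd x) = snd x" using True by (metis stream.collapse)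
  ultimately show ?thesis using True by simp
qed auto

lemma act_tsum_out_arcs:
  assumes "set es = out_arcs G v" and "distinct es" and "out_arcs G v \<noteq> {}"
  shows "act G (tsum (map (\<lambda>e. Mul (Gen (Ed e)) (Gen (Gh e))) es)) \<phi> x = act G (Gen (V v)) \<phi> x"
proof -
  have "act G (tsum (map (\<lambda>e. Mul (Gen (Ed e)) (Gen (Gh e))) es)) \<phi> x
      = (\<Sum>e\<in>out_arcs G v. if boundary_path G x \<and> shd (snd x) = Some e then \<phi> x else 0)"
    unfolding act_tsum map_map comp_def act_edge_ghost
    by (simp only: sum_list_distinct_conv_sum_set[OF assms(2)] assms(1))
  also have "\<dots> = act G (Gen (V v)) \<phi> x"
  proof (cases "boundary_path G x")
    case bp: True
    show ?thesis
    proof (cases "shd (snd x)")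
      case None
      then have "fst x \<noteq> v" using boundary_path_None[of G "fst x" "snd x"] bp assms(3) by auto
      then show ?thesis using None assms(3) by simp
    next
      case (Some e0)
      then have "e0 \<in> arcs G" "tail G e0 = fst x"
        using boundary_path_Some[of G "fst x" "snd x" e0] bp by simp_all
      moreover have "(\<Sum>e\<in>out_arcs G v. if boundary_path G x \<and> shd (snd x) = Some e then \<phi> x else 0)
          = (if e0 \<in> out_arcs G v then \<phi> x else 0)"
        using Some bp by (simp add: sum.delta' flip: assms(1))
      ultimately show ?thesis using bp by (auto simp: out_arcs_def)
    qed
  qed simp
  finally show ?thesis .
qed

context wf_digraph
begin

theorem act_sound: "leq G s t \<Longrightarrow> act G s = act G t"
proof (induction rule: leq.induct)
  case (cong_mul x x' y y')
  then show ?case by simp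
next
  case (distr_l x y z)
  then show ?case by (simp add: act_add fun_eq_iff)
next
  case (smul_mul_r a x y)
  then show ?case by (simp add: act_scale fun_eq_iff)
next
  case (ck2 v es)
  then have "set es = out_arcs G v" "out_arcs G v \<noteq> {}" by (simp_all add: out_arcs_def)
  then show ?case by (intro ext act_tsum_out_arcs[symmetric] ck2(5))
qed (auto simp: fun_eq_iff algebra_simps boundary_path_SCons_Some_iff
          dest: boundary_path_fst_in_verts boundary_path_Some)

end

section \<open>Cylinder sets\<close>

definition cylinder :: "('v,'e) pre_digraph \<Rightarrow> 'v \<times> 'e list \<Rightarrow> ('v,'e) bpoint set" where
  "cylinder G a = {x. boundary_path G x \<and> fst x = fst a
                      \<and> stake (length (snd a)) (snd x) = map Some (snd a)}"

lemma cylinder_antimono: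
  assumes "fst a = fst b" and "prefix (snd a) (snd b)"
  shows "cylinder G b \<subseteq> cylinder G a"
proof
  fix x assume x: "x \<in> cylinder G b"
  obtain zs where zs: "snd b = snd a @ zs" using assms(2) by (auto simp: prefix_def)
  then have "stake (length (snd a)) (snd x) @ stake (length zs) (sdrop (length (snd a)) (snd x))
      = map Some (snd a) @ map Some zs"
    unfolding stake_add using x by (simp add: cylinder_def)
  then have "stake (length (snd a)) (snd x) = map Some (snd a)"
    by (simp add: append_eq_append_conv del: stake_add)
  then show "x \<in> cylinder G a" using x assms(1) by (simp add: cylinder_def)
qed

lemma act_edges_tm:
  "es \<noteq> [] \<Longrightarrow> act G (edges_tm es) \<phi> x =
    (if boundary_path G x \<and> stake (length es) (snd x) = map Some es
     then \<phi> (head G (last es), sdrop (length es) (snd x)) else 0)"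
proof (induction es arbitrary: x rule: edges_tm.induct)
  case (3 e e' es)
  then show ?case using boundary_path_Some[of G "fst x" "snd x" e] by auto
qed auto

lemma boundary_path_sdrop:
  "boundary_path G (v, s) \<Longrightarrow> stake (length es) s = map Some es \<Longrightarrow> es \<noteq> [] \<Longrightarrow>
    boundary_path G (head G (last es), sdrop (length es) s)"
proof (induction es arbitrary: v s)
  case (Cons e es)
  then show ?case using boundary_path_Some[of G v s e] by (cases "es = []") auto
qed simp

context wf_digraph
begin

lemma boundary_path_shift:
  "is_path G (v, es) \<Longrightarrow> es \<noteq> [] \<Longrightarrow> boundary_path G (head G (last es), s) \<Longrightarrow>
    boundary_path G (v, map Some es @- s)"
proof (induction es arbitrary: v)
  case (Cons e es)
  then show ?case
    by (cases "es = []") (auto simp: is_path_Cons boundary_path_SCons_Some_iff)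
qed simp

lemma act_ghosts_tm:
  "is_path G (v, es) \<Longrightarrow> es \<noteq> [] \<Longrightarrow> act G (ghosts_tm es) \<phi> y =
    (if boundary_path G y \<and> fst y = head G (last es) then \<phi> (v, map Some es @- snd y) else 0)"
proof (induction es arbitrary: v \<phi> rule: ghosts_tm.induct)
  case (3 e e' es)
  then have p: "is_path G (head G e, e' # es)" "tail G e = v" "e \<in> arcs G"
    by (simp_all add: is_path_Cons)
  have "boundary_path G (head G e, map Some (e' # es) @- snd y)"
    if "boundary_path G y" "fst y = head G (last (e' # es))"
    using boundary_path_shift[OF p(1)] that by (metis list.distinct(1) prod.collapse)
  then show ?case using 3(1)[OF p(1)] p(2,3) by auto
qed (auto simp: is_path_Cons)

lemma act_path_ghost:
  assumes a: "is_path G a"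
  shows "act G (Mul (path_tm a) (ghost_tm a)) \<phi> x = (if x \<in> cylinder G a then \<phi> x else 0)"
proof -
  obtain v es where ab: "a = (v, es)" by fastforce
  show ?thesis
  proof (cases es)
    case Nil
    then show ?thesis using ab by (simp add: path_tm_def ghost_tm_def cylinder_def)
  next
    case (Cons e es')
    let ?n = "length es" and ?s = "snd x"
    have p: "is_path G (v, es)" using a ab by simp
    have "x \<in> cylinder G a" if "boundary_path G x" "stake ?n ?s = map Some es"
    proof -
      have "shd ?s = Some e" using that(2) Cons by (cases ?s) simp
      then show ?thesis using that p Cons boundary_path_Some[of G "fst x" "snd x" e] ab
        by (simp add: cylinder_def is_path_Cons)
    qed
    moreover have "map Some es @- sdrop ?n ?s = ?s" if "stake ?n ?s = map Some es"
      using that stake_sdrop[of ?n ?s] by simp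
    ultimately show ?thesis
      using Cons ab p boundary_path_sdrop[of G "fst x" ?s es]
      by (auto simp: path_tm_def ghost_tm_def act_edges_tm act_ghosts_tm cylinder_def)
  qed
qed

lemma cylinder_nonempty: "is_path G a \<Longrightarrow> cylinder G a \<noteq> {}"
proof (induction "snd a" arbitrary: a)
  case Nil
  then show ?case using ex_boundary_path[of "fst a"]
    by (fastforce simp: cylinder_def is_path_def)
next
  case (Cons e es)
  then have e: "e \<in> arcs G" "tail G e = fst a" "is_path G (head G e, es)"
    using is_path_Cons[of "fst a" e es] by (metis prod.collapse)+
  then obtain x where x: "x \<in> cylinder G (head G e, es)" using Cons.hyps(1)[of "(head G e, es)"] by auto
  then have "boundary_path G x" "fst x = head G e" by (simp_all add: cylinder_def)
  then have "boundary_path G (head G e, snd x)" by (metis prod.collapse)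
  then have "boundary_path G (fst a, Some e ## snd x)"
    using e boundary_path.arc[of e G "snd x"] by simp
  then have "(fst a, Some e ## snd x) \<in> cylinder G a"
    using x Cons.hyps(2)[symmetric] by (simp add: cylinder_def)
  then show ?case by blast
qed

end

lemma (in fin_digraph) act_one_tm:
  assumes x: "boundary_path G x"
  shows "act G (one_tm G) \<phi> x = \<phi> x"
proof -
  define vs where "vs = (SOME vs. set vs = verts G \<and> distinct vs)"
  have vs: "set vs = verts G" "distinct vs"
    using someI_ex[OF finite_distinct_list[OF finite_verts]] unfolding vs_def by auto
  have "act G (one_tm G) \<phi> x = (\<Sum>v\<in>verts G. act G (Gen (V v)) \<phi> x)"
    using vs by (simp add: one_tm_def vs_def[symmetric] act_tsum sum_list_distinct_conv_sum_set comp_def)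
  also have "\<dots> = \<phi> x" using x boundary_path_fst_in_verts[OF x] by (simp add: sum.delta)
  finally show ?thesis .
qed

lemma (in fin_digraph) card_cylinders_containing:
  fixes \<alpha> :: "nat \<Rightarrow> 'a \<times> 'b list"
  assumes paths: "\<forall>i<n. is_path G (\<alpha> i)"
    and unit: "leq G (tsum (map (\<lambda>i. Mul (path_tm (\<alpha> i)) (ghost_tm (\<alpha> i))) [0..<n]))
                 (one_tm G :: ('a,'b,'r::{comm_ring_1, ring_char_0}) lterm)"
    and x: "boundary_path G x"
  shows "card {i. i < n \<and> x \<in> cylinder G (\<alpha> i)} = 1"
proof -
  have "of_nat (card {i. i < n \<and> x \<in> cylinder G (\<alpha> i)})
      = (\<Sum>i<n. if x \<in> cylinder G (\<alpha> i) then 1 else (0::'r))"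
    by (simp add: sum.inter_filter[symmetric])
  also have "\<dots> = (\<Sum>i<n. act G (Mul (path_tm (\<alpha> i)) (ghost_tm (\<alpha> i))) (\<lambda>_. 1) x)"
  proof (rule sum.cong[OF HOL.refl])
    fix i assume "i \<in> {..<n}"
    then show "(if x \<in> cylinder G (\<alpha> i) then 1 else 0)
        = act G (Mul (path_tm (\<alpha> i)) (ghost_tm (\<alpha> i))) (\<lambda>_. 1::'r) x"
      using act_path_ghost[of "\<alpha> i" "\<lambda>_. 1::'r" x] paths by simp
  qed
  also have "\<dots> = act G (tsum (map (\<lambda>i. Mul (path_tm (\<alpha> i)) (ghost_tm (\<alpha> i))) [0..<n])) (\<lambda>_. 1) x"
    unfolding act_tsum map_map comp_def sum_set_upt_conv_sum_list_nat[symmetric] set_upt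
      atLeast0LessThan ..
  also have "\<dots> = act G (one_tm G :: ('a,'b,'r) lterm) (\<lambda>_. 1) x"
    using act_sound[OF unit] by simp
  also have "\<dots> = 1" using act_one_tm[OF x] .
  finally show ?thesis by (simp only: of_nat_eq_1_iff) \<comment> \<open>the only use of characteristic 0\<close>
qed

lemma (in fin_digraph) not_prefix_if_same_source:
  fixes \<alpha> :: "nat \<Rightarrow> 'a \<times> 'b list"
  assumes paths: "\<forall>i<n. is_path G (\<alpha> i)"
    and unit: "leq G (tsum (map (\<lambda>i. Mul (path_tm (\<alpha> i)) (ghost_tm (\<alpha> i))) [0..<n]))
                 (one_tm G :: ('a,'b,'r::{comm_ring_1, ring_char_0}) lterm)"
    and ij: "i < n" "j < n" "i \<noteq> j" and source: "fst (\<alpha> i) = fst (\<alpha> j)"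
  shows "\<not> prefix (snd (\<alpha> i)) (snd (\<alpha> j))"
proof
  assume "prefix (snd (\<alpha> i)) (snd (\<alpha> j))"
  then have sub: "cylinder G (\<alpha> j) \<subseteq> cylinder G (\<alpha> i)" by (rule cylinder_antimono[OF source])
  obtain x where x: "x \<in> cylinder G (\<alpha> j)" using cylinder_nonempty paths ij(2) by blast
  then have "boundary_path G x" by (simp add: cylinder_def)
  have "2 = card {i, j}" using ij(3) by simp
  also have "\<dots> \<le> card {k. k < n \<and> x \<in> cylinder G (\<alpha> k)}"
    using sub x ij by (intro card_mono) auto
  also have "\<dots> = 1" by (rule card_cylinders_containing[OF paths unit \<open>boundary_path G x\<close>])
  finally show False by simp
qed

theorem lemma4p1:
  fixes G :: "('v,'e) pre_digraph"
    and \<alpha> :: "nat \<Rightarrow> 'v \<times> 'e list"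
    and n :: nat
  assumes "fin_digraph G"
    and "\<forall>i<n. is_path G (\<alpha> i)"
    and "leq G (tsum (map (\<lambda>i. Mul (path_tm (\<alpha> i)) (ghost_tm (\<alpha> i))) [0..<n]))
               (one_tm G :: ('v,'e,'r::{comm_ring_1, ring_char_0}) lterm)"
  shows "\<forall>i<n. \<forall>j<n. i \<noteq> j \<longrightarrow>
           leq G (Mul (ghost_tm (\<alpha> i)) (path_tm (\<alpha> j)) :: ('v,'e,'r) lterm) Zero"
proof (intro allI impI)
  interpret fin_digraph G by (rule assms(1))
  fix i j assume ij: "i < n" "j < n" "i \<noteq> j"
  show "leq G (Mul (ghost_tm (\<alpha> i)) (path_tm (\<alpha> j)) :: ('v,'e,'r) lterm) Zero"
  proof (rule ghost_path_zero_if_incomparable)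
    show "is_path G (\<alpha> i)" "is_path G (\<alpha> j)" using assms(2) ij by simp_all
    assume same: "fst (\<alpha> i) = fst (\<alpha> j)"
    show "\<not> prefix (snd (\<alpha> i)) (snd (\<alpha> j)) \<and> \<not> prefix (snd (\<alpha> j)) (snd (\<alpha> i))"
      using not_prefix_if_same_source[OF assms(2,3) ij same]
        not_prefix_if_same_source[OF assms(2,3) ij(2,1) ij(3)[symmetric] same[symmetric]]
      by (rule conjI)
  qed
qed

end
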